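(* Let $A\to B$ be a horizontal (respectively vertical) arrow in a double complex in an abelian category, and suppose the row (respectively column) containing this arrow is exact at both $A$ and $B$. Then the extramural map $A_\square\to{}^\square B$ is an isomorphism.
   Context: Work in an abelian category $\mathcal{A}$. A double complex is a family of objects $A_{i,r}$ $(i,r\in\mathbb{Z})$ of $\mathcal{A}$, drawn in a grid with $i$ indexing rows (increasing downward) and $r$ indexing columns (increasing to the right), with horizontal maps $\delta_2:A_{i,r}\to A_{i,r+1}$ and vertical maps $\delta_1:A_{i,r}\to A_{i+1,r}$ satisfying $\delta_2\delta_2=0$, $\delta_1\delta_1=0$, $\delta_1\delta_2=\delta_2\delta_1$. A finite commutative diagram of this shape whose rows and columns are complexes is regarded as a double complex by completing it with zero objects. For an object $A=A_{i,r}$ write $d:A_{i,r-1}\to A$ and $e:A\to A_{i,r+1}$ for the horizontal maps into and out of $A$, $c:A_{i-1,r}\to A$ and $f:A\to A_{i+1,r}$ for the vertical maps into and out of $A$, $p:A_{i-1,r-1}\to A$ for the (common) composite of two arrows ending at $A$, and $q:A\to A_{i+1,r+1}$ for the composite of two arrows starting at $A$. Define: horizontal homology $H^{\mathrm h}(A)=\ker e/\operatorname{im} d$; vertical homology $H^{\mathrm v}(A)=\ker f/\operatorname{im} c$; the receptor ${}^\square A=(\ker e\cap\ker f)/\operatorname{im} p$; the donor $A_\square=\ker q/(\operatorname{im} c+\operatorname{im} d)$. The identity of $A$ induces the "intramural" maps ${}^\square A\to H^{\mathrm h}(A)\to A_\square$ and ${}^\square A\to H^{\mathrm v}(A)\to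 A_\square$. Each arrow $g:A\to B$ of the double complex (horizontal or vertical) induces the "extramural" map $A_\square\to{}^\square B$. A row or column is exact at an object if its homology there is zero. *)

theory Defs
  imports Main
begin

text \<open>A category is given by total types of objects 'o and morphisms 'm, with domain,
  codomain, composition (Comp C g f = g after f, meaningful when Dom g = Cod f) and identities.\<close>

record ('o, 'm) abcat =
  Dom  :: "'m \<Rightarrow> 'o"
  Cod  :: "'m \<Rightarrow> 'o"
  Comp :: "'m \<Rightarrow> 'm \<Rightarrow> 'm"
  Idm  :: "'o \<Rightarrow> 'm"
  Add  :: "'m \<Rightarrow> 'm \<Rightarrow> 'm"
  Zer  :: "'o \<Rightarrow> 'o \<Rightarrow> 'm"
  Neg  :: "'m \<Rightarrow> 'm"

definition hom :: "('o, 'm) abcat \<Rightarrow> 'o \<Rightarrow> 'o \<Rightarrow> 'm set" where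
  "hom C a b = {f. Dom C f = a \<and> Cod C f = b}"

definition is_category :: "('o, 'm) abcat \<Rightarrow> bool" where
  "is_category C \<longleftrightarrow>
     (\<forall>a. Idm C a \<in> hom C a a) \<and>
     (\<forall>f g. Dom C g = Cod C f \<longrightarrow> Comp C g f \<in> hom C (Dom C f) (Cod C g)) \<and>
     (\<forall>f. Comp C (Idm C (Cod C f)) f = f) \<and>
     (\<forall>f. Comp C f (Idm C (Dom C f)) = f) \<and>
     (\<forall>f g h. Dom C h = Cod C g \<and> Dom C g = Cod C f \<longrightarrow>
        Comp C (Comp C h g) f = Comp C h (Comp C g f))"

definition is_preadditive :: "('o, 'm) abcat \<Rightarrow> bool" where
  "is_preadditive C \<longleftrightarrow> is_category C \<and>
     (\<forall>a b. Zer C a b \<in> hom C a b) \<and>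
     (\<forall>a b f g. f \<in> hom C a b \<and> g \<in> hom C a b \<longrightarrow> Add C f g \<in> hom C a b) \<and>
     (\<forall>a b f. f \<in> hom C a b \<longrightarrow> Neg C f \<in> hom C a b) \<and>
     (\<forall>a b f g h. f \<in> hom C a b \<and> g \<in> hom C a b \<and> h \<in> hom C a b \<longrightarrow>
        Add C (Add C f g) h = Add C f (Add C g h)) \<and>
     (\<forall>a b f g. f \<in> hom C a b \<and> g \<in> hom C a b \<longrightarrow> Add C f g = Add C g f) \<and>
     (\<forall>a b f. f \<in> hom C a b \<longrightarrow> Add C f (Zer C a b) = f) \<and>
     (\<forall>a b f. f \<in> hom C a b \<longrightarrow> Add C f (Neg C f) = Zer C a b) \<and>
     (\<forall>a b c f g g'. f \<in> hom C a b \<and> g \<in> hom C b c \<and> g' \<in> hom C b c \<longrightarrow>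
        Comp C (Add C g g') f = Add C (Comp C g f) (Comp C g' f)) \<and>
     (\<forall>a b c f f' g. f \<in> hom C a b \<and> f' \<in> hom C a b \<and> g \<in> hom C b c \<longrightarrow>
        Comp C g (Add C f f') = Add C (Comp C g f) (Comp C g f'))"

definition is_zero_obj :: "('o, 'm) abcat \<Rightarrow> 'o \<Rightarrow> bool" where
  "is_zero_obj C z \<longleftrightarrow> (\<forall>a. (\<exists>!f. f \<in> hom C a z) \<and> (\<exists>!f. f \<in> hom C z a))"

definition is_additive :: "('o, 'm) abcat \<Rightarrow> bool" where
  "is_additive C \<longleftrightarrow> is_preadditive C \<and>
     (\<exists>z. is_zero_obj C z) \<and>
     (\<forall>a b. \<exists>s p1 p2 i1 i2.
        p1 \<in> hom C s a \<and> p2 \<in> hom C s b \<and> i1 \<in> hom C a s \<and> i2 \<in> hom C b s \<and>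
        Comp C p1 i1 = Idm C a \<and> Comp C p2 i2 = Idm C b \<and>
        Comp C p1 i2 = Zer C b a \<and> Comp C p2 i1 = Zer C a b \<and>
        Add C (Comp C i1 p1) (Comp C i2 p2) = Idm C s)"

definition is_mono :: "('o, 'm) abcat \<Rightarrow> 'm \<Rightarrow> bool" where
  "is_mono C m \<longleftrightarrow> (\<forall>g h. Cod C g = Dom C m \<and> Cod C h = Dom C m \<and> Dom C g = Dom C h \<and>
      Comp C m g = Comp C m h \<longrightarrow> g = h)"

definition is_epi :: "('o, 'm) abcat \<Rightarrow> 'm \<Rightarrow> bool" where
  "is_epi C e \<longleftrightarrow> (\<forall>g h. Dom C g = Cod C e \<and> Dom C h = Cod C e \<and> Cod C g = Cod C h \<and>
      Comp C g e = Comp C h e \<longrightarrow> g = h)"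

definition is_iso :: "('o, 'm) abcat \<Rightarrow> 'm \<Rightarrow> bool" where
  "is_iso C f \<longleftrightarrow> (\<exists>g. g \<in> hom C (Cod C f) (Dom C f) \<and>
      Comp C g f = Idm C (Dom C f) \<and> Comp C f g = Idm C (Cod C f))"

definition is_kernel :: "('o, 'm) abcat \<Rightarrow> 'm \<Rightarrow> 'm \<Rightarrow> bool" where
  "is_kernel C f k \<longleftrightarrow> Cod C k = Dom C f \<and> Comp C f k = Zer C (Dom C k) (Cod C f) \<and>
     (\<forall>h. Cod C h = Dom C f \<and> Comp C f h = Zer C (Dom C h) (Cod C f) \<longrightarrow>
        (\<exists>!u. Cod C u = Dom C k \<and> Dom C u = Dom C h \<and> Comp C k u = h))"

definition is_cokernel :: "('o, 'm) abcat \<Rightarrow> 'm \<Rightarrow> 'm \<Rightarrow> bool" where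
  "is_cokernel C f c \<longleftrightarrow> Dom C c = Cod C f \<and> Comp C c f = Zer C (Dom C f) (Cod C c) \<and>
     (\<forall>h. Dom C h = Cod C f \<and> Comp C h f = Zer C (Dom C f) (Cod C h) \<longrightarrow>
        (\<exists>!u. Dom C u = Cod C c \<and> Cod C u = Cod C h \<and> Comp C u c = h))"

definition is_abelian :: "('o, 'm) abcat \<Rightarrow> bool" where
  "is_abelian C \<longleftrightarrow> is_additive C \<and>
     (\<forall>f. \<exists>k. is_kernel C f k) \<and>
     (\<forall>f. \<exists>c. is_cokernel C f c) \<and>
     (\<forall>m. is_mono C m \<longrightarrow> (\<exists>f. is_kernel C f m)) \<and>
     (\<forall>e. is_epi C e \<longrightarrow> (\<exists>f. is_cokernel C f e))"

text \<open>Intersection of the kernels of e and f (same domain): the subobject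
  ker e \<inter> ker f, presented by its inclusion morphism (a joint kernel).\<close>
definition is_jkernel :: "('o, 'm) abcat \<Rightarrow> 'm \<Rightarrow> 'm \<Rightarrow> 'm \<Rightarrow> bool" where
  "is_jkernel C e f k \<longleftrightarrow> Cod C k = Dom C e \<and> Dom C f = Dom C e \<and>
     Comp C e k = Zer C (Dom C k) (Cod C e) \<and> Comp C f k = Zer C (Dom C k) (Cod C f) \<and>
     (\<forall>h. Cod C h = Dom C e \<and> Comp C e h = Zer C (Dom C h) (Cod C e) \<and>
          Comp C f h = Zer C (Dom C h) (Cod C f) \<longrightarrow>
        (\<exists>!u. Cod C u = Dom C k \<and> Dom C u = Dom C h \<and> Comp C k u = h))"

text \<open>Quotient of Cod u (= Cod v) by the sum of the images of u and v (a joint cokernel).\<close>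
definition is_jcokernel :: "('o, 'm) abcat \<Rightarrow> 'm \<Rightarrow> 'm \<Rightarrow> 'm \<Rightarrow> bool" where
  "is_jcokernel C u v c \<longleftrightarrow> Dom C c = Cod C u \<and> Cod C v = Cod C u \<and>
     Comp C c u = Zer C (Dom C u) (Cod C c) \<and> Comp C c v = Zer C (Dom C v) (Cod C c) \<and>
     (\<forall>h. Dom C h = Cod C u \<and> Comp C h u = Zer C (Dom C u) (Cod C h) \<and>
          Comp C h v = Zer C (Dom C v) (Cod C h) \<longrightarrow>
        (\<exists>!t. Dom C t = Cod C c \<and> Cod C t = Cod C h \<and> Comp C t c = h))"

definition ker :: "('o, 'm) abcat \<Rightarrow> 'm \<Rightarrow> 'm" where
  "ker C f = (SOME k. is_kernel C f k)"
definition coker :: "('o, 'm) abcat \<Rightarrow> 'm \<Rightarrow> 'm" where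
  "coker C f = (SOME c. is_cokernel C f c)"
definition jker :: "('o, 'm) abcat \<Rightarrow> 'm \<Rightarrow> 'm \<Rightarrow> 'm" where
  "jker C e f = (SOME k. is_jkernel C e f k)"
definition jcoker :: "('o, 'm) abcat \<Rightarrow> 'm \<Rightarrow> 'm \<Rightarrow> 'm" where
  "jcoker C u v = (SOME c. is_jcokernel C u v c)"

definition factor :: "('o, 'm) abcat \<Rightarrow> 'm \<Rightarrow> 'm \<Rightarrow> 'm" where
  "factor C k h = (SOME u. Cod C u = Dom C k \<and> Dom C u = Dom C h \<and> Comp C k u = h)"

text \<open>Objects X i r (row i, column r); horizontal maps d2 i r : X i r \<rightarrow> X i (r+1),
  vertical maps d1 i r : X i r \<rightarrow> X (i+1) r.\<close>
definition double_complex ::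
  "('o, 'm) abcat \<Rightarrow> (int \<Rightarrow> int \<Rightarrow> 'o) \<Rightarrow> (int \<Rightarrow> int \<Rightarrow> 'm) \<Rightarrow> (int \<Rightarrow> int \<Rightarrow> 'm) \<Rightarrow> bool" where
  "double_complex C X d1 d2 \<longleftrightarrow>
     (\<forall>i r. d2 i r \<in> hom C (X i r) (X i (r + 1))) \<and>
     (\<forall>i r. d1 i r \<in> hom C (X i r) (X (i + 1) r)) \<and>
     (\<forall>i r. Comp C (d2 i (r + 1)) (d2 i r) = Zer C (X i r) (X i (r + 2))) \<and>
     (\<forall>i r. Comp C (d1 (i + 1) r) (d1 i r) = Zer C (X i r) (X (i + 2) r)) \<and>
     (\<forall>i r. Comp C (d1 i (r + 1)) (d2 i r) = Comp C (d2 (i + 1) r) (d1 i r))"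

text \<open>Horizontal homology at (i,r): ker e / im d, as the cokernel of the factorization
  of d through ker e; this is the quotient map from ker e onto H^h.\<close>
definition Hh_proj :: "('o, 'm) abcat \<Rightarrow> (int \<Rightarrow> int \<Rightarrow> 'm) \<Rightarrow> int \<Rightarrow> int \<Rightarrow> 'm" where
  "Hh_proj C d2 i r = coker C (factor C (ker C (d2 i r)) (d2 i (r - 1)))"

definition Hv_proj :: "('o, 'm) abcat \<Rightarrow> (int \<Rightarrow> int \<Rightarrow> 'm) \<Rightarrow> int \<Rightarrow> int \<Rightarrow> 'm" where
  "Hv_proj C d1 i r = coker C (factor C (ker C (d1 i r)) (d1 (i - 1) r))"

definition row_exact_at :: "('o, 'm) abcat \<Rightarrow> (int \<Rightarrow> int \<Rightarrow> 'm) \<Rightarrow> int \<Rightarrow> int \<Rightarrow> bool" where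
  "row_exact_at C d2 i r \<longleftrightarrow> is_zero_obj C (Cod C (Hh_proj C d2 i r))"

definition col_exact_at :: "('o, 'm) abcat \<Rightarrow> (int \<Rightarrow> int \<Rightarrow> 'm) \<Rightarrow> int \<Rightarrow> int \<Rightarrow> bool" where
  "col_exact_at C d1 i r \<longleftrightarrow> is_zero_obj C (Cod C (Hv_proj C d1 i r))"

text \<open>Receptor at A = X i r: (ker e \<inter> ker f) / im p.\<close>
definition rec_incl where
  "rec_incl C d1 d2 i r = jker C (d2 i r) (d1 i r)"
definition rec_proj where
  "rec_proj C d1 d2 i r = coker C (factor C (rec_incl C d1 d2 i r)
       (Comp C (d1 (i - 1) r) (d2 (i - 1) (r - 1))))"

text \<open>Donor at A = X i r: ker q / (im c + im d).\<close>
definition don_incl where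
  "don_incl C d1 d2 i r = ker C (Comp C (d1 i (r + 1)) (d2 i r))"
definition don_proj where
  "don_proj C d1 d2 i r = jcoker C (factor C (don_incl C d1 d2 i r) (d1 (i - 1) r))
                                   (factor C (don_incl C d1 d2 i r) (d2 i (r - 1)))"

text \<open>Extramural map A_\<box> \<rightarrow> \<box>B induced by an arrow g : A = X i r \<rightarrow> B = X i' r'
  of the double complex: the unique m with m \<circ> (ker q \<rightarrow> A_\<box>) = (ker e_B \<inter> ker f_B \<rightarrow> \<box>B) \<circ> w,
  where w is the factorization of g \<circ> (ker q \<hookrightarrow> A) through ker e_B \<inter> ker f_B.\<close>
definition extramural where
  "extramural C d1 d2 i r i' r' g =
     (SOME m. Dom C m = Cod C (don_proj C d1 d2 i r) \<and>
              Cod C m = Cod C (rec_proj C d1 d2 i' r') \<and>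
              Comp C m (don_proj C d1 d2 i r) =
                Comp C (rec_proj C d1 d2 i' r')
                  (factor C (rec_incl C d1 d2 i' r') (Comp C g (don_incl C d1 d2 i r))))"

end

theory Submission
  imports Defs
begin

(* Let g : A -> B be an arrow of the double complex, d and c the arrows into A
   parallel and transverse to g, and e and f the arrows out of B parallel and transverse to g.
   Put K = ker (f g) with inclusion k, so that A_box = K / (im c + im d) with projection pi,
   and J = ker e /\ ker f with inclusion j, so that box B = J / im (g c) with projection rho.
   The extramural map m is determined by m pi = rho w, where w : K -> J is induced by g.
   Exactness at B makes w epi, hence rho w is epi; exactness at A shows that every arrow
   killed by rho w is killed by pi.  Two epimorphisms out of K with comparable kernels in
   both directions differ by an isomorphism, so m is an isomorphism.
   The diagram chases are carried out with the lifting property of epimorphisms along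
   pullbacks, which replaces elements in an abstract abelian category. *)

section \<open>Abelian categories\<close>

locale abelian_cat =
  fixes C :: "('o, 'm) abcat"
  assumes abelian: "is_abelian C"
begin

abbreviation comp (infixr "\<cdot>" 70) where "g \<cdot> f \<equiv> Comp C g f"
abbreviation zr where "zr a b \<equiv> Zer C a b"
abbreviation dom where "dom \<equiv> Dom C"
abbreviation cod where "cod \<equiv> Cod C"
abbreviation madd (infixl "\<oplus>" 65) where "f \<oplus> g \<equiv> Add C f g"
abbreviation mneg where "mneg f \<equiv> Neg C f"

lemma category: "is_category C" and preadditive: "is_preadditive C" and additive: "is_additive C"
  using abelian unfolding is_abelian_def is_additive_def is_preadditive_def by auto

lemma comp_dom [simp]: "dom g = cod f \<Longrightarrow> dom (g \<cdot> f) = dom f"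
  and comp_cod [simp]: "dom g = cod f \<Longrightarrow> cod (g \<cdot> f) = cod g"
  using category unfolding is_category_def hom_def by auto

lemma assoc: "dom h = cod g \<Longrightarrow> dom g = cod f \<Longrightarrow> (h \<cdot> g) \<cdot> f = h \<cdot> (g \<cdot> f)"
  using category unfolding is_category_def by auto

lemma id_dom [simp]: "dom (Idm C a) = a" and id_cod [simp]: "cod (Idm C a) = a"
  using category unfolding is_category_def hom_def by auto

lemma id_left [simp]: "cod f = a \<Longrightarrow> Idm C a \<cdot> f = f"
  and id_right [simp]: "dom f = a \<Longrightarrow> f \<cdot> Idm C a = f"
  using category unfolding is_category_def by auto

lemma zr_dom [simp]: "dom (zr a b) = a" and zr_cod [simp]: "cod (zr a b) = b"
  using preadditive unfolding is_preadditive_def hom_def by auto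

lemma add_dom [simp]: "dom f = dom g \<Longrightarrow> cod f = cod g \<Longrightarrow> dom (f \<oplus> g) = dom f"
  and add_cod [simp]: "dom f = dom g \<Longrightarrow> cod f = cod g \<Longrightarrow> cod (f \<oplus> g) = cod f"
  using preadditive unfolding is_preadditive_def hom_def by auto

lemma neg_dom [simp]: "dom (mneg f) = dom f" and neg_cod [simp]: "cod (mneg f) = cod f"
  using preadditive unfolding is_preadditive_def hom_def by auto

lemma add_assoc: "dom f = dom g \<Longrightarrow> cod f = cod g \<Longrightarrow> dom h = dom g \<Longrightarrow> cod h = cod g \<Longrightarrow>
    (f \<oplus> g) \<oplus> h = f \<oplus> (g \<oplus> h)"
proof -
  have "\<forall>a b f g h. f \<in> hom C a b \<and> g \<in> hom C a b \<and> h \<in> hom C a b \<longrightarrow>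
      (f \<oplus> g) \<oplus> h = f \<oplus> (g \<oplus> h)"
    using preadditive unfolding is_preadditive_def by (elim conjE) assumption
  thus "dom f = dom g \<Longrightarrow> cod f = cod g \<Longrightarrow> dom h = dom g \<Longrightarrow> cod h = cod g \<Longrightarrow> ?thesis"
    unfolding hom_def by blast
qed

lemma add_comm: "dom f = dom g \<Longrightarrow> cod f = cod g \<Longrightarrow> f \<oplus> g = g \<oplus> f"
proof -
  have "\<forall>a b f g. f \<in> hom C a b \<and> g \<in> hom C a b \<longrightarrow> f \<oplus> g = g \<oplus> f"
    using preadditive unfolding is_preadditive_def by (elim conjE) assumption
  thus "dom f = dom g \<Longrightarrow> cod f = cod g \<Longrightarrow> ?thesis" unfolding hom_def by blast
qed

lemma add_zr: "dom f = a \<Longrightarrow> cod f = b \<Longrightarrow> f \<oplus> zr a b = f"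
proof -
  have "\<forall>a b f. f \<in> hom C a b \<longrightarrow> f \<oplus> zr a b = f"
    using preadditive unfolding is_preadditive_def by (elim conjE) assumption
  thus "dom f = a \<Longrightarrow> cod f = b \<Longrightarrow> ?thesis" unfolding hom_def by blast
qed

lemma add_neg: "f \<oplus> mneg f = zr (dom f) (cod f)"
proof -
  have "\<forall>a b f. f \<in> hom C a b \<longrightarrow> f \<oplus> mneg f = zr a b"
    using preadditive unfolding is_preadditive_def by (elim conjE) assumption
  thus ?thesis unfolding hom_def by blast
qed

lemma neg_add: "mneg f \<oplus> f = zr (dom f) (cod f)"
  using add_comm[of "mneg f" f] by (simp add: add_neg)

lemma distr_right: "dom g = cod f \<Longrightarrow> dom g' = cod f \<Longrightarrow> cod g' = cod g \<Longrightarrow>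
    (g \<oplus> g') \<cdot> f = (g \<cdot> f) \<oplus> (g' \<cdot> f)"
proof -
  have "\<forall>a b c f g g'. f \<in> hom C a b \<and> g \<in> hom C b c \<and> g' \<in> hom C b c \<longrightarrow>
      (g \<oplus> g') \<cdot> f = (g \<cdot> f) \<oplus> (g' \<cdot> f)"
    using preadditive unfolding is_preadditive_def by (elim conjE) assumption
  thus "dom g = cod f \<Longrightarrow> dom g' = cod f \<Longrightarrow> cod g' = cod g \<Longrightarrow> ?thesis"
    unfolding hom_def by blast
qed

lemma distr_left: "dom f = dom f' \<Longrightarrow> cod f' = cod f \<Longrightarrow> dom g = cod f \<Longrightarrow>
    g \<cdot> (f \<oplus> f') = (g \<cdot> f) \<oplus> (g \<cdot> f')"
proof -
  have "\<forall>a b c f f' g. f \<in> hom C a b \<and> f' \<in> hom C a b \<and> g \<in> hom C b c \<longrightarrow>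
      g \<cdot> (f \<oplus> f') = (g \<cdot> f) \<oplus> (g \<cdot> f')"
    using preadditive unfolding is_preadditive_def by (elim conjE) assumption
  thus "dom f = dom f' \<Longrightarrow> cod f' = cod f \<Longrightarrow> dom g = cod f \<Longrightarrow> ?thesis"
    unfolding hom_def by blast
qed

lemma inverse_unique:
  assumes "dom a = dom x" "cod a = cod x" "dom b = dom x" "cod b = cod x"
    and "a \<oplus> x = zr (dom x) (cod x)" "b \<oplus> x = zr (dom x) (cod x)"
  shows "a = b"
proof -
  have "a = a \<oplus> (x \<oplus> mneg x)" using assms(1,2) by (simp add: add_neg add_zr)
  also have "\<dots> = (a \<oplus> x) \<oplus> mneg x" by (rule add_assoc[symmetric]) (use assms in simp_all)
  also have "\<dots> = (b \<oplus> x) \<oplus> mneg x" using assms(5,6) by simp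
  also have "\<dots> = b \<oplus> (x \<oplus> mneg x)" by (rule add_assoc) (use assms in simp_all)
  also have "\<dots> = b" using assms(3,4) by (simp add: add_neg add_zr)
  finally show ?thesis .
qed

lemma idempotent_zero: assumes "x \<oplus> x = x" shows "x = zr (dom x) (cod x)"
proof -
  have "x = x \<oplus> (x \<oplus> mneg x)" by (simp add: add_neg add_zr)
  also have "\<dots> = (x \<oplus> x) \<oplus> mneg x" by (simp add: add_assoc)
  finally show ?thesis using assms by (simp add: add_neg)
qed

lemma zr_comp [simp]: "cod f = a \<Longrightarrow> zr a b \<cdot> f = zr (dom f) b"
proof -
  assume f: "cod f = a"
  have "(zr a b \<cdot> f) \<oplus> (zr a b \<cdot> f) = (zr a b \<oplus> zr a b) \<cdot> f"
    using f by (simp add: distr_right)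
  also have "\<dots> = zr a b \<cdot> f" by (simp add: add_zr)
  finally have "zr a b \<cdot> f = zr (dom (zr a b \<cdot> f)) (cod (zr a b \<cdot> f))" by (rule idempotent_zero)
  with f show ?thesis by simp
qed

lemma comp_zr [simp]: "dom f = b \<Longrightarrow> f \<cdot> zr a b = zr a (cod f)"
proof -
  assume f: "dom f = b"
  have "(f \<cdot> zr a b) \<oplus> (f \<cdot> zr a b) = f \<cdot> (zr a b \<oplus> zr a b)"
    using f by (simp add: distr_left)
  also have "\<dots> = f \<cdot> zr a b" by (simp add: add_zr)
  finally have "f \<cdot> zr a b = zr (dom (f \<cdot> zr a b)) (cod (f \<cdot> zr a b))" by (rule idempotent_zero)
  with f show ?thesis by simp
qed

lemma neg_comp: "dom y = cod v \<Longrightarrow> mneg y \<cdot> v = mneg (y \<cdot> v)"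
proof (rule inverse_unique[of _ "y \<cdot> v"])
  assume yv: "dom y = cod v"
  have "(mneg y \<cdot> v) \<oplus> (y \<cdot> v) = (mneg y \<oplus> y) \<cdot> v" using yv by (simp add: distr_right)
  thus "(mneg y \<cdot> v) \<oplus> (y \<cdot> v) = zr (dom (y \<cdot> v)) (cod (y \<cdot> v))" using yv by (simp add: neg_add)
qed (simp_all add: neg_add)

lemma comp_neg: "dom m = cod h \<Longrightarrow> m \<cdot> mneg h = mneg (m \<cdot> h)"
proof (rule inverse_unique[of _ "m \<cdot> h"])
  assume mh: "dom m = cod h"
  have "(m \<cdot> mneg h) \<oplus> (m \<cdot> h) = m \<cdot> (mneg h \<oplus> h)" using mh by (simp add: distr_left)
  thus "(m \<cdot> mneg h) \<oplus> (m \<cdot> h) = zr (dom (m \<cdot> h)) (cod (m \<cdot> h))" using mh by (simp add: neg_add)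
qed (simp_all add: neg_add)

lemma difference_zero: "dom a = dom b \<Longrightarrow> cod a = cod b \<Longrightarrow> a \<oplus> mneg b = zr (dom b) (cod b) \<Longrightarrow> a = b"
  by (rule inverse_unique[of _ "mneg b"]) (auto simp: add_neg)

lemma difference_cancel: "dom a = dom b \<Longrightarrow> cod a = cod b \<Longrightarrow> (a \<oplus> mneg b) \<oplus> b = a"
  by (subst add_assoc) (simp_all add: neg_add add_zr)

lemma mono_unique: "is_mono C m \<Longrightarrow> cod a = dom m \<Longrightarrow> cod b = dom m \<Longrightarrow> dom a = dom b \<Longrightarrow>
    m \<cdot> a = m \<cdot> b \<Longrightarrow> a = b"
  unfolding is_mono_def by blast

lemma epi_unique: "is_epi C e \<Longrightarrow> dom a = cod e \<Longrightarrow> dom b = cod e \<Longrightarrow> cod a = cod b \<Longrightarrow>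
    a \<cdot> e = b \<cdot> e \<Longrightarrow> a = b"
  unfolding is_epi_def by blast

lemma epi_cancel: "is_epi C e \<Longrightarrow> dom t = cod e \<Longrightarrow> t \<cdot> e = zr (dom e) (cod t) \<Longrightarrow>
    t = zr (cod e) (cod t)"
  unfolding is_epi_def by (erule allE[of _ t], erule allE[of _ "zr (cod e) (cod t)"]) simp

lemma mono_cancel: "is_mono C m \<Longrightarrow> cod t = dom m \<Longrightarrow> m \<cdot> t = zr (dom t) (cod m) \<Longrightarrow>
    t = zr (dom t) (dom m)"
  unfolding is_mono_def by (erule allE[of _ t], erule allE[of _ "zr (dom t) (dom m)"]) simp

lemma epiI:
  assumes "\<And>t. dom t = cod e \<Longrightarrow> t \<cdot> e = zr (dom e) (cod t) \<Longrightarrow> t = zr (cod e) (cod t)"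
  shows "is_epi C e"
  unfolding is_epi_def
proof (intro allI impI)
  fix g h assume gh: "dom g = cod e \<and> dom h = cod e \<and> cod g = cod h \<and> g \<cdot> e = h \<cdot> e"
  have "(g \<oplus> mneg h) \<cdot> e = (g \<cdot> e) \<oplus> mneg (h \<cdot> e)" using gh by (simp add: distr_right neg_comp)
  also have "\<dots> = zr (dom e) (cod (g \<oplus> mneg h))" using gh by (simp add: add_neg)
  finally have "g \<oplus> mneg h = zr (cod e) (cod (g \<oplus> mneg h))" using gh by - (rule assms, simp_all)
  thus "g = h" using gh by - (rule difference_zero, simp_all)
qed

lemma monoI:
  assumes "\<And>t. cod t = dom m \<Longrightarrow> m \<cdot> t = zr (dom t) (cod m) \<Longrightarrow> t = zr (dom t) (dom m)"
  shows "is_mono C m"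
  unfolding is_mono_def
proof (intro allI impI)
  fix g h assume gh: "cod g = dom m \<and> cod h = dom m \<and> dom g = dom h \<and> m \<cdot> g = m \<cdot> h"
  have "m \<cdot> (g \<oplus> mneg h) = (m \<cdot> g) \<oplus> mneg (m \<cdot> h)" using gh by (simp add: distr_left comp_neg)
  also have "\<dots> = zr (dom (g \<oplus> mneg h)) (cod m)" using gh by (simp add: add_neg)
  finally have "g \<oplus> mneg h = zr (dom (g \<oplus> mneg h)) (dom m)" using gh by - (rule assms, simp_all)
  thus "g = h" using gh by - (rule difference_zero, simp_all)
qed

lemma epi_comp: "is_epi C a \<Longrightarrow> is_epi C b \<Longrightarrow> dom a = cod b \<Longrightarrow> is_epi C (a \<cdot> b)"
proof (rule epiI)
  fix t assume ab: "is_epi C a" "is_epi C b" "dom a = cod b"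
    and t: "dom t = cod (a \<cdot> b)" "t \<cdot> a \<cdot> b = zr (dom (a \<cdot> b)) (cod t)"
  have "(t \<cdot> a) \<cdot> b = zr (dom b) (cod (t \<cdot> a))" using ab t by (simp add: assoc)
  hence "t \<cdot> a = zr (cod b) (cod (t \<cdot> a))" using ab t by - (rule epi_cancel, simp_all)
  hence "t = zr (cod a) (cod t)" using ab t by - (rule epi_cancel, simp_all)
  thus "t = zr (cod (a \<cdot> b)) (cod t)" using ab by simp
qed

lemma epi_left: "is_epi C (a \<cdot> b) \<Longrightarrow> dom a = cod b \<Longrightarrow> is_epi C a"
proof (rule epiI)
  fix t assume ab: "is_epi C (a \<cdot> b)" "dom a = cod b" and t: "dom t = cod a" "t \<cdot> a = zr (dom a) (cod t)"
  have "t \<cdot> a \<cdot> b = zr (dom (a \<cdot> b)) (cod t)" using ab t by (simp add: assoc[symmetric])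
  hence "t = zr (cod (a \<cdot> b)) (cod t)" using ab t by - (rule epi_cancel, simp_all)
  thus "t = zr (cod a) (cod t)" using ab by simp
qed

lemma mono_comp: "is_mono C a \<Longrightarrow> is_mono C b \<Longrightarrow> dom a = cod b \<Longrightarrow> is_mono C (a \<cdot> b)"
proof (rule monoI)
  fix t assume ab: "is_mono C a" "is_mono C b" "dom a = cod b"
    and t: "cod t = dom (a \<cdot> b)" "(a \<cdot> b) \<cdot> t = zr (dom t) (cod (a \<cdot> b))"
  have "a \<cdot> b \<cdot> t = zr (dom (b \<cdot> t)) (cod a)" using ab t by (simp add: assoc)
  hence "b \<cdot> t = zr (dom (b \<cdot> t)) (dom a)" using ab t by - (rule mono_cancel, simp_all)
  hence "t = zr (dom t) (dom b)" using ab t by - (rule mono_cancel, simp_all)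
  thus "t = zr (dom t) (dom (a \<cdot> b))" using ab by simp
qed

text \<open>A kernel of f is the same as a joint kernel of f and f; dually for cokernels.
  This lets the basic properties be proved once, for the joint notions.\<close>

lemma kernel_is_jkernel: "is_kernel C f k \<Longrightarrow> is_jkernel C f f k"
  unfolding is_kernel_def is_jkernel_def by simp

lemma cokernel_is_jcokernel: "is_cokernel C f c \<Longrightarrow> is_jcokernel C f f c"
  unfolding is_cokernel_def is_jcokernel_def by simp

lemma jkernel_sym: "is_jkernel C e f k \<Longrightarrow> is_jkernel C f e k"
  unfolding is_jkernel_def by auto

lemma jcokernel_sym: "is_jcokernel C u v c \<Longrightarrow> is_jcokernel C v u c"
  unfolding is_jcokernel_def by auto

lemma jkernel_cod: "is_jkernel C e f k \<Longrightarrow> cod k = dom e"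
  and jkernel_zero1: "is_jkernel C e f k \<Longrightarrow> e \<cdot> k = zr (dom k) (cod e)"
  and jkernel_zero2: "is_jkernel C e f k \<Longrightarrow> f \<cdot> k = zr (dom k) (cod f)"
  unfolding is_jkernel_def by auto

lemma jcokernel_dom: "is_jcokernel C u v c \<Longrightarrow> dom c = cod u"
  and jcokernel_zero1: "is_jcokernel C u v c \<Longrightarrow> c \<cdot> u = zr (dom u) (cod c)"
  and jcokernel_zero2: "is_jcokernel C u v c \<Longrightarrow> c \<cdot> v = zr (dom v) (cod c)"
  unfolding is_jcokernel_def by auto

lemma kernel_cod: "is_kernel C f k \<Longrightarrow> cod k = dom f"
  and kernel_zero: "is_kernel C f k \<Longrightarrow> f \<cdot> k = zr (dom k) (cod f)"
  unfolding is_kernel_def by auto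

lemma cokernel_dom: "is_cokernel C f c \<Longrightarrow> dom c = cod f"
  and cokernel_zero: "is_cokernel C f c \<Longrightarrow> c \<cdot> f = zr (dom f) (cod c)"
  unfolding is_cokernel_def by auto

lemma jkernel_lift: "is_jkernel C e f k \<Longrightarrow> cod h = dom e \<Longrightarrow> e \<cdot> h = zr (dom h) (cod e) \<Longrightarrow>
    f \<cdot> h = zr (dom h) (cod f) \<Longrightarrow> \<exists>u. cod u = dom k \<and> dom u = dom h \<and> k \<cdot> u = h"
  unfolding is_jkernel_def by blast

lemma kernel_lift: "is_kernel C f k \<Longrightarrow> cod h = dom f \<Longrightarrow> f \<cdot> h = zr (dom h) (cod f) \<Longrightarrow>
    \<exists>u. cod u = dom k \<and> dom u = dom h \<and> k \<cdot> u = h"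
  unfolding is_kernel_def by blast

lemma jcokernel_desc: "is_jcokernel C u v c \<Longrightarrow> dom h = cod u \<Longrightarrow> h \<cdot> u = zr (dom u) (cod h) \<Longrightarrow>
    h \<cdot> v = zr (dom v) (cod h) \<Longrightarrow> \<exists>t. dom t = cod c \<and> cod t = cod h \<and> t \<cdot> c = h"
  unfolding is_jcokernel_def by blast

lemma cokernel_desc: "is_cokernel C f c \<Longrightarrow> dom h = cod f \<Longrightarrow> h \<cdot> f = zr (dom f) (cod h) \<Longrightarrow>
    \<exists>u. dom u = cod c \<and> cod u = cod h \<and> u \<cdot> c = h"
  unfolding is_cokernel_def by blast

lemma jkernel_mono: assumes k: "is_jkernel C e f k" shows "is_mono C k"
proof (rule monoI)
  fix t assume t: "cod t = dom k" "k \<cdot> t = zr (dom t) (cod k)"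
  have "\<exists>!u. cod u = dom k \<and> dom u = dom t \<and> k \<cdot> u = zr (dom t) (cod k)"
    using k unfolding is_jkernel_def by (elim conjE allE[of _ "zr (dom t) (cod k)"]) simp
  moreover have "cod (zr (dom t) (dom k)) = dom k \<and> dom (zr (dom t) (dom k)) = dom t \<and>
      k \<cdot> zr (dom t) (dom k) = zr (dom t) (cod k)" by simp
  ultimately show "t = zr (dom t) (dom k)" using t by blast
qed

lemma jcokernel_epi: assumes c: "is_jcokernel C u v c" shows "is_epi C c"
proof (rule epiI)
  fix t assume t: "dom t = cod c" "t \<cdot> c = zr (dom c) (cod t)"
  have "\<exists>!s. dom s = cod c \<and> cod s = cod t \<and> s \<cdot> c = zr (dom c) (cod t)"
    using c unfolding is_jcokernel_def by (elim conjE allE[of _ "zr (dom c) (cod t)"]) simp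
  moreover have "dom (zr (cod c) (cod t)) = cod c \<and> cod (zr (cod c) (cod t)) = cod t \<and>
      zr (cod c) (cod t) \<cdot> c = zr (dom c) (cod t)" by simp
  ultimately show "t = zr (cod c) (cod t)" using t by blast
qed

lemma kernel_mono: "is_kernel C f k \<Longrightarrow> is_mono C k"
  by (rule jkernel_mono[OF kernel_is_jkernel])

lemma cokernel_epi: "is_cokernel C f c \<Longrightarrow> is_epi C c"
  by (rule jcokernel_epi[OF cokernel_is_jcokernel])

lemma factor_jkernel:
  assumes "is_jkernel C e f k" "cod h = dom e" "e \<cdot> h = zr (dom h) (cod e)" "f \<cdot> h = zr (dom h) (cod f)"
  shows "cod (factor C k h) = dom k" "dom (factor C k h) = dom h" "k \<cdot> factor C k h = h"
proof -
  have "\<exists>u. cod u = dom k \<and> dom u = dom h \<and> k \<cdot> u = h" using jkernel_lift[OF assms] .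
  hence "cod (factor C k h) = dom k \<and> dom (factor C k h) = dom h \<and> k \<cdot> factor C k h = h"
    unfolding factor_def by (rule someI_ex)
  thus "cod (factor C k h) = dom k" "dom (factor C k h) = dom h" "k \<cdot> factor C k h = h" by auto
qed

lemma factor_kernel:
  assumes "is_kernel C f k" "cod h = dom f" "f \<cdot> h = zr (dom h) (cod f)"
  shows "cod (factor C k h) = dom k" "dom (factor C k h) = dom h" "k \<cdot> factor C k h = h"
  using factor_jkernel[OF kernel_is_jkernel[OF assms(1)] assms(2,3,3)] by auto

text \<open>Existence of the chosen (joint) kernels and cokernels.  Joint ones are built by
  iteration: ker e \<inter> ker f is the kernel of f restricted to ker e, and dually.\<close>

lemma ker_ex: "is_kernel C f (ker C f)"
proof -
  have "\<exists>k. is_kernel C f k" using abelian unfolding is_abelian_def by blast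
  thus ?thesis unfolding ker_def by (rule someI_ex)
qed

lemma coker_ex: "is_cokernel C f (coker C f)"
proof -
  have "\<exists>c. is_cokernel C f c" using abelian unfolding is_abelian_def by blast
  thus ?thesis unfolding coker_def by (rule someI_ex)
qed

lemma jker_ex: assumes fe: "dom f = dom e" shows "is_jkernel C e f (jker C e f)"
proof -
  define k1 where "k1 = ker C e"
  define k2 where "k2 = ker C (f \<cdot> k1)"
  have K1: "is_kernel C e k1" unfolding k1_def by (rule ker_ex)
  have K2: "is_kernel C (f \<cdot> k1) k2" unfolding k2_def by (rule ker_ex)
  have c1: "cod k1 = dom e" using kernel_cod[OF K1] .
  have c2: "cod k2 = dom k1" using kernel_cod[OF K2] c1 fe by simp
  have mono: "is_mono C (k1 \<cdot> k2)"
    using mono_comp[OF kernel_mono[OF K1] kernel_mono[OF K2]] c2 by simp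
  have "is_jkernel C e f (k1 \<cdot> k2)"
    unfolding is_jkernel_def
  proof (intro conjI allI impI)
    show "cod (k1 \<cdot> k2) = dom e" "dom f = dom e" using c1 c2 fe by simp_all
    show "e \<cdot> k1 \<cdot> k2 = zr (dom (k1 \<cdot> k2)) (cod e)"
      using c1 c2 kernel_zero[OF K1] by (simp add: assoc[symmetric])
    show "f \<cdot> k1 \<cdot> k2 = zr (dom (k1 \<cdot> k2)) (cod f)"
      using c1 c2 fe kernel_zero[OF K2] by (simp add: assoc[symmetric])
    fix h assume h: "cod h = dom e \<and> e \<cdot> h = zr (dom h) (cod e) \<and> f \<cdot> h = zr (dom h) (cod f)"
    obtain u1 where u1: "cod u1 = dom k1" "dom u1 = dom h" "k1 \<cdot> u1 = h"
      using kernel_lift[OF K1] h by blast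
    have "(f \<cdot> k1) \<cdot> u1 = zr (dom u1) (cod (f \<cdot> k1))" using h u1 c1 fe by (simp add: assoc)
    then obtain u2 where u2: "cod u2 = dom k2" "dom u2 = dom u1" "k2 \<cdot> u2 = u1"
      using kernel_lift[OF K2, of u1] u1 c1 fe by auto
    have u2_lifts: "cod u2 = dom (k1 \<cdot> k2) \<and> dom u2 = dom h \<and> (k1 \<cdot> k2) \<cdot> u2 = h"
      using u1 u2 c1 c2 by (simp add: assoc)
    show "\<exists>!u. cod u = dom (k1 \<cdot> k2) \<and> dom u = dom h \<and> (k1 \<cdot> k2) \<cdot> u = h"
      using u2_lifts mono_unique[OF mono] by (intro ex1I[of _ u2]) auto
  qed
  thus ?thesis unfolding jker_def by (rule someI)
qed

lemma jcoker_ex: assumes vu: "cod v = cod u" shows "is_jcokernel C u v (jcoker C u v)"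
proof -
  define c1 where "c1 = coker C u"
  define c2 where "c2 = coker C (c1 \<cdot> v)"
  have K1: "is_cokernel C u c1" unfolding c1_def by (rule coker_ex)
  have K2: "is_cokernel C (c1 \<cdot> v) c2" unfolding c2_def by (rule coker_ex)
  have d1: "dom c1 = cod u" using cokernel_dom[OF K1] .
  have d2: "dom c2 = cod c1" using cokernel_dom[OF K2] d1 vu by simp
  have epi: "is_epi C (c2 \<cdot> c1)"
    using epi_comp[OF cokernel_epi[OF K2] cokernel_epi[OF K1]] d2 by simp
  have "is_jcokernel C u v (c2 \<cdot> c1)"
    unfolding is_jcokernel_def
  proof (intro conjI allI impI)
    show "dom (c2 \<cdot> c1) = cod u" "cod v = cod u" using d1 d2 vu by simp_all
    show "(c2 \<cdot> c1) \<cdot> u = zr (dom u) (cod (c2 \<cdot> c1))"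
      using d1 d2 cokernel_zero[OF K1] by (simp add: assoc)
    show "(c2 \<cdot> c1) \<cdot> v = zr (dom v) (cod (c2 \<cdot> c1))"
      using d1 d2 vu cokernel_zero[OF K2] by (simp add: assoc)
    fix h assume h: "dom h = cod u \<and> h \<cdot> u = zr (dom u) (cod h) \<and> h \<cdot> v = zr (dom v) (cod h)"
    obtain t1 where t1: "dom t1 = cod c1" "cod t1 = cod h" "t1 \<cdot> c1 = h"
      using cokernel_desc[OF K1] h by blast
    have "t1 \<cdot> c1 \<cdot> v = zr (dom (c1 \<cdot> v)) (cod t1)" using h t1 d1 vu by (simp add: assoc[symmetric])
    then obtain t2 where t2: "dom t2 = cod c2" "cod t2 = cod t1" "t2 \<cdot> c2 = t1"
      using cokernel_desc[OF K2, of t1] t1 d1 vu by auto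
    have t2_desc: "dom t2 = cod (c2 \<cdot> c1) \<and> cod t2 = cod h \<and> t2 \<cdot> c2 \<cdot> c1 = h"
      using t1 t2 d1 d2 by (simp add: assoc[symmetric])
    show "\<exists>!t. dom t = cod (c2 \<cdot> c1) \<and> cod t = cod h \<and> t \<cdot> c2 \<cdot> c1 = h"
      using t2_desc epi_unique[OF epi] by (intro ex1I[of _ t2]) auto
  qed
  thus ?thesis unfolding jcoker_def by (rule someI)
qed

lemma normal_epi: "is_epi C e \<Longrightarrow> \<exists>f. is_cokernel C f e"
  and normal_mono: "is_mono C m \<Longrightarrow> \<exists>f. is_kernel C f m"
  using abelian unfolding is_abelian_def by blast+

text \<open>Since every epimorphism is a cokernel, an arrow factors through an epimorphism e
  as soon as it kills every arrow killed by e.\<close>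

lemma epi_desc:
  assumes e: "is_epi C e" and t: "dom t = dom e"
    and kills: "\<And>n. cod n = dom e \<Longrightarrow> e \<cdot> n = zr (dom n) (cod e) \<Longrightarrow> t \<cdot> n = zr (dom n) (cod t)"
  shows "\<exists>s. dom s = cod e \<and> cod s = cod t \<and> s \<cdot> e = t"
proof -
  obtain f where f: "is_cokernel C f e" using normal_epi[OF e] by blast
  have "t \<cdot> f = zr (dom f) (cod t)"
    using kills[of f] cokernel_zero[OF f] cokernel_dom[OF f] by simp
  thus ?thesis using cokernel_desc[OF f, of t] t cokernel_dom[OF f] by simp
qed

lemma image_factor_epi:
  assumes c: "is_cokernel C f c" and i: "is_kernel C c \<iota>"
    and f': "cod f' = dom \<iota>" "\<iota> \<cdot> f' = f"
  shows "is_epi C f'"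
proof (rule epiI)
  fix t assume t: "dom t = cod f'" "t \<cdot> f' = zr (dom f') (cod t)"
  define \<kappa> where "\<kappa> = ker C t"
  have K: "is_kernel C t \<kappa>" unfolding \<kappa>_def by (rule ker_ex)
  have c\<kappa>: "cod \<kappa> = dom \<iota>" using kernel_cod[OF K] t f' by simp
  have df: "dom f = dom f'" using f' comp_dom[of \<iota> f'] by simp
  obtain f3 where f3: "cod f3 = dom \<kappa>" "dom f3 = dom f'" "\<kappa> \<cdot> f3 = f'"
    using kernel_lift[OF K, of f'] t by auto
  have "is_mono C (\<iota> \<cdot> \<kappa>)" using mono_comp[OF kernel_mono[OF i] kernel_mono[OF K]] c\<kappa> by simp
  then obtain s where s: "is_kernel C s (\<iota> \<cdot> \<kappa>)" using normal_mono by blast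
  have ds: "dom s = dom c" using kernel_cod[OF s] c\<kappa> kernel_cod[OF i] by simp
  have "s \<cdot> f = (s \<cdot> \<iota> \<cdot> \<kappa>) \<cdot> f3" using f' f3 c\<kappa> ds kernel_cod[OF i] by (simp add: assoc)
  hence "s \<cdot> f = zr (dom f) (cod s)" using kernel_zero[OF s] f3 f' c\<kappa> df by simp
  then obtain s' where s': "dom s' = cod c" "cod s' = cod s" "s' \<cdot> c = s"
    using cokernel_desc[OF c, of s] ds cokernel_dom[OF c] by auto
  have "s \<cdot> \<iota> = s' \<cdot> c \<cdot> \<iota>" using s' kernel_cod[OF i] by (simp add: assoc[symmetric])
  hence "s \<cdot> \<iota> = zr (dom \<iota>) (cod s)" using kernel_zero[OF i] s' by simp
  then obtain v where v: "cod v = dom (\<iota> \<cdot> \<kappa>)" "dom v = dom \<iota>" "(\<iota> \<cdot> \<kappa>) \<cdot> v = \<iota>"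
    using kernel_lift[OF s, of \<iota>] ds kernel_cod[OF i] by auto
  have "\<kappa> \<cdot> v = Idm C (dom \<iota>)"
    by (rule mono_unique[OF kernel_mono[OF i]]) (use v c\<kappa> in \<open>simp_all add: assoc\<close>)
  hence "t = (t \<cdot> \<kappa>) \<cdot> v" using v c\<kappa> t f' by (simp add: assoc)
  thus "t = zr (cod f') (cod t)" using kernel_zero[OF K] v c\<kappa> f' by simp
qed

lemma biproduct:
  obtains S p1 p2 i1 i2 where
    "dom p1 = S" "cod p1 = a" "dom p2 = S" "cod p2 = b" "dom i1 = a" "cod i1 = S" "dom i2 = b" "cod i2 = S"
    "p1 \<cdot> i1 = Idm C a" "p2 \<cdot> i2 = Idm C b" "p2 \<cdot> i1 = zr a b"
  using additive unfolding is_additive_def hom_def by blast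

text \<open>Epimorphisms are stable under pullback: for an epi e and any y with the same codomain,
  y lifts along e after precomposition with an epimorphism u.  This is the substitute for
  choosing preimages of elements in diagram chases.  The pullback is the kernel of
  [e, -y] on the biproduct of dom e and dom y.\<close>

lemma epi_lifting:
  assumes e: "is_epi C e" and y: "cod y = cod e"
  shows "\<exists>u a. is_epi C u \<and> cod u = dom y \<and> dom a = dom u \<and> cod a = dom e \<and> e \<cdot> a = y \<cdot> u"
proof -
  obtain S p1 p2 i1 i2 where bp:
    "dom p1 = S" "cod p1 = dom e" "dom p2 = S" "cod p2 = dom y"
    "dom i1 = dom e" "cod i1 = S" "dom i2 = dom y" "cod i2 = S"
    "p1 \<cdot> i1 = Idm C (dom e)" "p2 \<cdot> i2 = Idm C (dom y)" "p2 \<cdot> i1 = zr (dom e) (dom y)"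
    by (rule biproduct)
  define \<phi> where "\<phi> = (e \<cdot> p1) \<oplus> (mneg y \<cdot> p2)"
  have \<phi>: "dom \<phi> = S" "cod \<phi> = cod e" unfolding \<phi>_def using bp y by simp_all
  have \<phi>_i1: "\<phi> \<cdot> i1 = e"
    unfolding \<phi>_def using bp y by (simp add: distr_right assoc add_zr)
  have \<phi>_epi: "is_epi C \<phi>" using e bp \<phi> \<phi>_i1 by - (rule epi_left[of \<phi> i1], simp_all)
  define k where "k = ker C \<phi>"
  have K: "is_kernel C \<phi> k" unfolding k_def by (rule ker_ex)
  have ck: "cod k = S" using kernel_cod[OF K] \<phi> by simp
  define u where "u = p2 \<cdot> k"
  define a where "a = p1 \<cdot> k"
  have ua: "cod u = dom y" "dom u = dom k" "dom a = dom u" "cod a = dom e"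
    unfolding u_def a_def using bp ck by simp_all
  have "(e \<cdot> a) \<oplus> mneg (y \<cdot> u) = \<phi> \<cdot> k"
    unfolding \<phi>_def a_def u_def using bp y ck by (simp add: distr_right assoc neg_comp)
  hence eq: "e \<cdot> a = y \<cdot> u"
    using kernel_zero[OF K] ua y \<phi> by - (rule difference_zero, simp_all add: u_def bp ck)
  have "is_epi C u"
  proof (rule epiI)
    fix t assume t: "dom t = cod u" "t \<cdot> u = zr (dom u) (cod t)"
    have "\<exists>s. dom s = cod \<phi> \<and> cod s = cod (t \<cdot> p2) \<and> s \<cdot> \<phi> = t \<cdot> p2"
    proof (rule epi_desc[OF \<phi>_epi])
      show "dom (t \<cdot> p2) = dom \<phi>" using t ua bp \<phi> by simp
      fix n assume n: "cod n = dom \<phi>" "\<phi> \<cdot> n = zr (dom n) (cod \<phi>)"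
      obtain n' where n': "cod n' = dom k" "dom n' = dom n" "k \<cdot> n' = n"
        using kernel_lift[OF K, of n] n by auto
      have "(t \<cdot> p2) \<cdot> n = (t \<cdot> u) \<cdot> n'"
        unfolding u_def n'(3)[symmetric] using n n' t ua bp ck \<phi> by (simp add: assoc)
      thus "(t \<cdot> p2) \<cdot> n = zr (dom n) (cod (t \<cdot> p2))" using t ua n' bp by simp
    qed
    then obtain s where s: "dom s = cod e" "cod s = cod t" "s \<cdot> \<phi> = t \<cdot> p2"
      using t ua bp \<phi> by auto
    have "s \<cdot> e = (s \<cdot> \<phi>) \<cdot> i1" using s(1) \<phi>_i1 \<phi> bp by (simp add: assoc)
    also have "\<dots> = t \<cdot> p2 \<cdot> i1" using s bp t ua by (simp add: assoc)
    also have "\<dots> = zr (dom e) (cod s)" using bp s t ua by simp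
    finally have "s = zr (cod e) (cod s)" using s by - (rule epi_cancel[OF e], simp_all)
    hence "t \<cdot> p2 = zr S (cod t)" using s \<phi> by simp
    hence "(t \<cdot> p2) \<cdot> i2 = zr (cod u) (cod t)" using bp t ua by simp
    thus "t = zr (cod u) (cod t)" using bp t ua by (simp add: assoc)
  qed
  thus ?thesis using ua eq by blast
qed

definition is_exact :: "'m \<Rightarrow> 'm \<Rightarrow> bool" where
  "is_exact d g \<longleftrightarrow> cod d = dom g \<and> g \<cdot> d = zr (dom d) (cod g) \<and> is_epi C (factor C (ker C g) d)"

lemma zero_obj_arrow: assumes z: "is_zero_obj C z" and u: "dom u = z" shows "u = zr z (cod u)"
proof -
  have "\<exists>!f. f \<in> hom C z (cod u)" using z unfolding is_zero_obj_def by blast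
  thus ?thesis using u unfolding hom_def by auto
qed

lemma exact_if_homology_zero:
  assumes gd: "cod d = dom g" "g \<cdot> d = zr (dom d) (cod g)"
    and zero: "is_zero_obj C (cod (coker C (factor C (ker C g) d)))"
  shows "is_exact d g"
  unfolding is_exact_def
proof (intro conjI gd epiI)
  let ?d' = "factor C (ker C g) d" and ?c = "coker C (factor C (ker C g) d)"
  have c: "is_cokernel C ?d' ?c" by (rule coker_ex)
  fix t assume t: "dom t = cod ?d'" "t \<cdot> ?d' = zr (dom ?d') (cod t)"
  obtain u where u: "dom u = cod ?c" "cod u = cod t" "u \<cdot> ?c = t"
    using cokernel_desc[OF c t] by blast
  have "u = zr (cod ?c) (cod t)" using zero_obj_arrow[OF zero u(1)] u(2) by simp
  thus "t = zr (cod ?d') (cod t)" using u(3) cokernel_dom[OF c] by auto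
qed

lemma cokernel_exact: assumes c: "is_cokernel C p \<rho>" shows "is_exact p \<rho>"
  unfolding is_exact_def
proof (intro conjI)
  show "cod p = dom \<rho>" "\<rho> \<cdot> p = zr (dom p) (cod \<rho>)" using c by (simp_all add: cokernel_dom cokernel_zero)
  have K: "is_kernel C \<rho> (ker C \<rho>)" by (rule ker_ex)
  note p' = factor_kernel[OF K, of p]
  show "is_epi C (factor C (ker C \<rho>) p)"
    using p' c by - (rule image_factor_epi[OF c K], simp_all add: cokernel_dom cokernel_zero)
qed

lemma exact_lift:
  assumes ex: "is_exact d g" and y: "cod y = dom g" "g \<cdot> y = zr (dom y) (cod g)"
  shows "\<exists>u x. is_epi C u \<and> cod u = dom y \<and> dom x = dom u \<and> cod x = dom d \<and> d \<cdot> x = y \<cdot> u"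
proof -
  let ?\<kappa> = "ker C g"
  have K: "is_kernel C g ?\<kappa>" by (rule ker_ex)
  have gd: "cod d = dom g" "g \<cdot> d = zr (dom d) (cod g)" and epi: "is_epi C (factor C ?\<kappa> d)"
    using ex unfolding is_exact_def by auto
  note d' = factor_kernel[OF K gd] and y' = factor_kernel[OF K y]
  obtain u x where ux: "is_epi C u" "cod u = dom (factor C ?\<kappa> y)" "dom x = dom u"
      "cod x = dom (factor C ?\<kappa> d)" "factor C ?\<kappa> d \<cdot> x = factor C ?\<kappa> y \<cdot> u"
    using epi_lifting[OF epi, of "factor C ?\<kappa> y"] d' y' by auto
  have "d \<cdot> x = ?\<kappa> \<cdot> factor C ?\<kappa> d \<cdot> x" using d' ux(4) by (simp add: assoc[symmetric])
  also have "\<dots> = y \<cdot> u" using ux y' by (simp add: assoc[symmetric])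
  finally show ?thesis using ux d' y' by auto
qed

lemma iso_between_epis:
  assumes epis: "is_epi C \<pi>" "is_epi C \<sigma>" and m: "dom m = cod \<pi>" "cod m = cod \<sigma>" "m \<cdot> \<pi> = \<sigma>"
    and kills: "\<And>n. cod n = dom \<sigma> \<Longrightarrow> \<sigma> \<cdot> n = zr (dom n) (cod \<sigma>) \<Longrightarrow> \<pi> \<cdot> n = zr (dom n) (cod \<pi>)"
  shows "is_iso C m"
proof -
  have dom_eq: "dom \<sigma> = dom \<pi>" using m by (metis comp_dom)
  obtain m' where m': "dom m' = cod \<sigma>" "cod m' = cod \<pi>" "m' \<cdot> \<sigma> = \<pi>"
    using epi_desc[OF epis(2), of \<pi>] kills dom_eq by auto
  have "m' \<cdot> m = Idm C (dom m)"
    by (rule epi_unique[OF epis(1)]) (use m m' in \<open>simp_all add: assoc\<close>)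
  moreover have "m \<cdot> m' = Idm C (cod m)"
    by (rule epi_unique[OF epis(2)]) (use m m' in \<open>simp_all add: assoc\<close>)
  ultimately show ?thesis unfolding is_iso_def hom_def using m m' by auto
qed

end

section \<open>The extramural map of a single arrow\<close>

text \<open>The data around an arrow g : A \<rightarrow> B: d and c are the arrows into A parallel and
  transverse to g, e and f the arrows out of B parallel and transverse to g.  The inclusion
  k : K \<rightarrow> A of K = ker (f g) and the projection \<pi> from K onto K / (im c + im d) present
  the donor of A; the inclusion j : J \<rightarrow> B of J = ker e \<inter> ker f presents the receptor of B
  as its quotient by im (g c).\<close>

locale extramural_setting = abelian_cat C for C :: "('o, 'm) abcat" +
  fixes g d c e f k j \<pi> :: 'm
  assumes exact_at_A: "is_exact d g"
    and exact_at_B: "is_exact g e"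
    and c_cod: "cod c = dom g"
    and f_dom: "dom f = cod g"
    and fgc_zero: "f \<cdot> g \<cdot> c = zr (dom c) (cod f)"
    and k_kernel: "is_kernel C (f \<cdot> g) k"
    and j_jkernel: "is_jkernel C e f j"
    and \<pi>_jcokernel: "is_jcokernel C (factor C k c) (factor C k d) \<pi>"
begin

definition c_K :: 'm where "c_K = factor C k c"
definition d_K :: 'm where "d_K = factor C k d"
definition w :: 'm where "w = factor C j (g \<cdot> k)"
definition p :: 'm where "p = factor C j (g \<cdot> c)"
definition \<rho> :: 'm where "\<rho> = coker C p"

lemma d_cod: "cod d = dom g" and gd_zero: "g \<cdot> d = zr (dom d) (cod g)"
  and e_dom: "dom e = cod g" and eg_zero: "e \<cdot> g = zr (dom g) (cod e)"
  using exact_at_A exact_at_B unfolding is_exact_def by auto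

lemma k_cod: "cod k = dom g"
  using kernel_cod[OF k_kernel] f_dom by simp

lemma j_cod: "cod j = cod g"
  using jkernel_cod[OF j_jkernel] e_dom by simp

lemma c_K: "cod c_K = dom k" "dom c_K = dom c" "k \<cdot> c_K = c"
  unfolding c_K_def using factor_kernel[OF k_kernel] c_cod f_dom fgc_zero by (simp_all add: assoc)

lemma d_K: "cod d_K = dom k" "dom d_K = dom d" "k \<cdot> d_K = d"
  unfolding d_K_def using factor_kernel[OF k_kernel] d_cod gd_zero f_dom by (simp_all add: assoc)

lemma w: "cod w = dom j" "dom w = dom k" "j \<cdot> w = g \<cdot> k"
proof -
  have "f \<cdot> g \<cdot> k = zr (dom k) (cod f)"
    using kernel_zero[OF k_kernel] k_cod f_dom by (simp add: assoc)
  thus "cod w = dom j" "dom w = dom k" "j \<cdot> w = g \<cdot> k"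
    unfolding w_def using factor_jkernel[OF j_jkernel, of "g \<cdot> k"] k_cod e_dom eg_zero f_dom
    by (simp_all add: assoc[symmetric])
qed

lemma p: "cod p = dom j" "dom p = dom c" "j \<cdot> p = g \<cdot> c"
  unfolding p_def using factor_jkernel[OF j_jkernel, of "g \<cdot> c"] c_cod e_dom eg_zero f_dom fgc_zero
  by (simp_all add: assoc[symmetric])

lemma \<rho>_cokernel: "is_cokernel C p \<rho>"
  unfolding \<rho>_def by (rule coker_ex)

lemma \<rho>_dom: "dom \<rho> = dom j"
  using cokernel_dom[OF \<rho>_cokernel] p by simp

lemma \<pi>_dom: "dom \<pi> = dom k"
  using jcokernel_dom[OF \<pi>_jcokernel] c_K unfolding c_K_def by simp

lemma j_w_comp: "cod x = dom k \<Longrightarrow> j \<cdot> w \<cdot> x = g \<cdot> k \<cdot> x"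
  using w k_cod by (simp add: assoc[symmetric])

lemma w_c_K: "w \<cdot> c_K = p"
  by (rule mono_unique[OF jkernel_mono[OF j_jkernel]]) (use w c_K p j_w_comp[of c_K] in simp_all)

lemma w_d_K: "w \<cdot> d_K = zr (dom d) (dom j)"
  by (rule mono_unique[OF jkernel_mono[OF j_jkernel]])
    (use w d_K gd_zero j_cod j_w_comp[of d_K] in simp_all)

text \<open>Exactness at B: every element of J comes from K, i.e. w is epi.  An element of
  J \<subseteq> ker e lifts along g to A; since it also lies in ker f, the lift lies in K.\<close>

lemma w_epi: "is_epi C w"
proof -
  obtain u a where ua: "is_epi C u" "cod u = dom j" "dom a = dom u" "cod a = dom g" "g \<cdot> a = j \<cdot> u"
    using exact_lift[OF exact_at_B, of j] j_cod e_dom jkernel_zero1[OF j_jkernel] by auto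
  have "f \<cdot> g \<cdot> a = zr (dom a) (cod f)"
    using ua jkernel_zero2[OF j_jkernel] j_cod f_dom by (simp add: assoc[symmetric])
  then obtain a' where a': "cod a' = dom k" "dom a' = dom a" "k \<cdot> a' = a"
    using kernel_lift[OF k_kernel, of a] ua f_dom by (auto simp: assoc)
  have "w \<cdot> a' = u"
    by (rule mono_unique[OF jkernel_mono[OF j_jkernel]]) (use w a' ua j_w_comp[of a'] in simp_all)
  hence "is_epi C (w \<cdot> a')" using ua by simp
  thus ?thesis by (rule epi_left) (simp add: w(2) a'(1))
qed

text \<open>Exactness at A: an element n of K with \<rho> (w n) = 0 is, after an epimorphic cover v,
  a combination of elements of im d and im c.  Indeed w n lies in im p, say w n = p z,
  so k n - c z lies in ker g = im d.\<close>

lemma kernel_chase: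
  assumes n: "cod n = dom k" "(\<rho> \<cdot> w) \<cdot> n = zr (dom n) (cod \<rho>)"
  shows "\<exists>v x y. is_epi C v \<and> cod v = dom n \<and> dom x = dom v \<and> cod x = dom d \<and>
           dom y = dom v \<and> cod y = dom c \<and> n \<cdot> v = (d_K \<cdot> x) \<oplus> (c_K \<cdot> y)"
proof -
  obtain u z where uz: "is_epi C u" "cod u = dom n" "dom z = dom u" "cod z = dom c" "p \<cdot> z = (w \<cdot> n) \<cdot> u"
    using exact_lift[OF cokernel_exact[OF \<rho>_cokernel], of "w \<cdot> n"] n w p \<rho>_dom by (auto simp: assoc)
  have gknu: "g \<cdot> k \<cdot> n \<cdot> u = g \<cdot> c \<cdot> z"
  proof -
    have "g \<cdot> k \<cdot> n \<cdot> u = j \<cdot> w \<cdot> n \<cdot> u" using j_w_comp[of "n \<cdot> u"] n uz by simp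
    also have "\<dots> = j \<cdot> p \<cdot> z" using w n uz by (simp add: assoc)
    also have "\<dots> = g \<cdot> c \<cdot> z" using p uz(3,4) c_cod by (simp add: assoc[symmetric])
    finally show ?thesis .
  qed
  define \<delta> where "\<delta> = (k \<cdot> n \<cdot> u) \<oplus> mneg (c \<cdot> z)"
  have \<delta>: "dom \<delta> = dom u" "cod \<delta> = dom g" unfolding \<delta>_def using n uz k_cod c_cod by simp_all
  have "g \<cdot> \<delta> = (g \<cdot> c \<cdot> z) \<oplus> mneg (g \<cdot> c \<cdot> z)"
    unfolding \<delta>_def using n uz k_cod c_cod gknu by (simp add: distr_left comp_neg)
  hence "g \<cdot> \<delta> = zr (dom \<delta>) (cod g)" using \<delta> uz c_cod by (simp add: add_neg)
  then obtain u2 x where ux: "is_epi C u2" "cod u2 = dom u" "dom x = dom u2" "cod x = dom d"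
      "d \<cdot> x = \<delta> \<cdot> u2"
    using exact_lift[OF exact_at_A, of \<delta>] \<delta> by auto
  have "k \<cdot> n \<cdot> u \<cdot> u2 = (\<delta> \<oplus> (c \<cdot> z)) \<cdot> u2"
    unfolding \<delta>_def using n uz ux k_cod c_cod by (simp add: difference_cancel assoc[symmetric])
  also have "\<dots> = (d \<cdot> x) \<oplus> (c \<cdot> z \<cdot> u2)"
    using \<delta> uz ux c_cod by (simp add: distr_right assoc)
  also have "\<dots> = k \<cdot> ((d_K \<cdot> x) \<oplus> (c_K \<cdot> z \<cdot> u2))"
    using d_K c_K uz ux by (simp add: distr_left assoc[symmetric])
  finally have "n \<cdot> u \<cdot> u2 = (d_K \<cdot> x) \<oplus> (c_K \<cdot> z \<cdot> u2)"
    by (rule mono_unique[OF kernel_mono[OF k_kernel], rotated -1])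
      (use n uz ux d_K c_K in simp_all)
  moreover have "is_epi C (u \<cdot> u2)" using epi_comp[OF uz(1) ux(1)] ux by simp
  ultimately show ?thesis using n uz ux by (intro exI[of _ "u \<cdot> u2"] exI[of _ x] exI[of _ "z \<cdot> u2"])
      (simp add: assoc)
qed

text \<open>Hence \<pi> kills everything that \<rho> w kills, as \<pi> kills im c and im d.\<close>

lemma \<pi>_kills:
  assumes n: "cod n = dom k" "(\<rho> \<cdot> w) \<cdot> n = zr (dom n) (cod \<rho>)"
  shows "\<pi> \<cdot> n = zr (dom n) (cod \<pi>)"
proof -
  obtain v x y where v: "is_epi C v" "cod v = dom n" "dom x = dom v" "cod x = dom d"
      "dom y = dom v" "cod y = dom c" "n \<cdot> v = (d_K \<cdot> x) \<oplus> (c_K \<cdot> y)"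
    using kernel_chase[OF n] by blast
  have "(\<pi> \<cdot> n) \<cdot> v = (\<pi> \<cdot> d_K \<cdot> x) \<oplus> (\<pi> \<cdot> c_K \<cdot> y)"
    using v n \<pi>_dom d_K c_K by (simp add: assoc distr_left)
  also have "\<dots> = zr (dom v) (cod (\<pi> \<cdot> n))"
    using jcokernel_zero1[OF \<pi>_jcokernel] jcokernel_zero2[OF \<pi>_jcokernel] v n \<pi>_dom d_K c_K
    unfolding c_K_def[symmetric] d_K_def[symmetric] by (simp add: assoc[symmetric] add_zr)
  finally have "\<pi> \<cdot> n = zr (cod v) (cod (\<pi> \<cdot> n))" using v n \<pi>_dom by - (rule epi_cancel, simp_all)
  thus ?thesis using v n \<pi>_dom by simp
qed

text \<open>The extramural map m, characterized by m \<pi> = \<rho> w, exists since \<rho> w kills im c and im d,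
  and it is an isomorphism by the two lemmas above.\<close>

lemma extramural_exists: "\<exists>m. dom m = cod \<pi> \<and> cod m = cod \<rho> \<and> m \<cdot> \<pi> = \<rho> \<cdot> w"
proof -
  have "(\<rho> \<cdot> w) \<cdot> c_K = zr (dom c_K) (cod (\<rho> \<cdot> w))"
    using w_c_K w c_K \<rho>_dom cokernel_zero[OF \<rho>_cokernel] p by (simp add: assoc)
  moreover have "(\<rho> \<cdot> w) \<cdot> d_K = zr (dom d_K) (cod (\<rho> \<cdot> w))"
    using w_d_K w d_K \<rho>_dom by (simp add: assoc)
  ultimately show ?thesis
    using jcokernel_desc[OF \<pi>_jcokernel, of "\<rho> \<cdot> w"] w c_K \<rho>_dom
    unfolding c_K_def[symmetric] d_K_def[symmetric] by auto
qed

theorem extramural_iso: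
  "is_iso C (SOME m. dom m = cod \<pi> \<and> cod m = cod (coker C (factor C j (g \<cdot> c))) \<and>
                     m \<cdot> \<pi> = coker C (factor C j (g \<cdot> c)) \<cdot> factor C j (g \<cdot> k))"
proof -
  define m where "m = (SOME m. dom m = cod \<pi> \<and> cod m = cod \<rho> \<and> m \<cdot> \<pi> = \<rho> \<cdot> w)"
  have m: "dom m = cod \<pi>" "cod m = cod (\<rho> \<cdot> w)" "m \<cdot> \<pi> = \<rho> \<cdot> w"
    using someI_ex[OF extramural_exists] \<rho>_dom w unfolding m_def by simp_all
  have "is_epi C (\<rho> \<cdot> w)"
    using epi_comp[OF cokernel_epi[OF \<rho>_cokernel] w_epi] \<rho>_dom w by simp
  from iso_between_epis[OF jcokernel_epi[OF \<pi>_jcokernel] this m] have "is_iso C m"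
    using \<pi>_kills \<rho>_dom w by simp
  thus ?thesis unfolding m_def \<rho>_def p_def w_def .
qed

end

text \<open>The setting arises from the chosen kernels and (joint) cokernels, in either order
  of the arguments of the joint ones.\<close>

lemma (in abelian_cat) extramural_settingI:
  assumes "is_exact d g" "is_exact g e" "cod c = dom g" "dom f = cod g"
    and fgc: "f \<cdot> g \<cdot> c = zr (dom c) (cod f)"
    and k: "k = ker C (f \<cdot> g)"
    and j: "j = jker C e f \<or> j = jker C f e"
    and \<pi>: "\<pi> = jcoker C (factor C k c) (factor C k d) \<or> \<pi> = jcoker C (factor C k d) (factor C k c)"
  shows "extramural_setting C g d c e f k j \<pi>"
proof
  show K: "is_kernel C (f \<cdot> g) k" unfolding k by (rule ker_ex)
  have "dom e = cod g" "cod d = dom g" "g \<cdot> d = zr (dom d) (cod g)"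
    using assms(1,2) unfolding is_exact_def by auto
  thus "is_jkernel C e f j" using j jker_ex[of f e] jker_ex[of e f] jkernel_sym assms(4) by auto
  have "cod (factor C k c) = dom k" "cod (factor C k d) = dom k"
    using factor_kernel[OF K] assms(3,4) fgc \<open>cod d = dom g\<close> \<open>g \<cdot> d = _\<close> by (simp_all add: assoc)
  thus "is_jcokernel C (factor C k c) (factor C k d) \<pi>"
    using \<pi> jcoker_ex[of "factor C k c" "factor C k d"] jcoker_ex[of "factor C k d" "factor C k c"]
      jcokernel_sym by auto
qed (use assms in auto)

section \<open>Double complexes\<close>

locale abelian_double_complex = abelian_cat C for C :: "('o, 'm) abcat" +
  fixes X :: "int \<Rightarrow> int \<Rightarrow> 'o" and d1 d2 :: "int \<Rightarrow> int \<Rightarrow> 'm"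
  assumes double_complex: "double_complex C X d1 d2"
begin

lemma d2_dom [simp]: "dom (d2 i r) = X i r" and d2_cod [simp]: "cod (d2 i r) = X i (r + 1)"
  and d1_dom [simp]: "dom (d1 i r) = X i r" and d1_cod [simp]: "cod (d1 i r) = X (i + 1) r"
  using double_complex unfolding double_complex_def hom_def by auto

text \<open>Rows and columns are complexes; the successor index is kept as a variable s (resp. h)
  so that the rules apply at r - 1 and r + 1 alike.\<close>

lemma d2_d2: "s = r + 1 \<Longrightarrow> d2 i s \<cdot> d2 i r = zr (X i r) (X i (s + 1))"
  using double_complex unfolding double_complex_def by (simp add: add.assoc)

lemma d1_d1: "h = i + 1 \<Longrightarrow> d1 h r \<cdot> d1 i r = zr (X i r) (X (h + 1) r)"
  using double_complex unfolding double_complex_def by (simp add: add.assoc)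

lemma d1_d2_commute: "d1 i (r + 1) \<cdot> d2 i r = d2 (i + 1) r \<cdot> d1 i r"
  using double_complex unfolding double_complex_def by simp

lemma row_exact: "row_exact_at C d2 i r \<Longrightarrow> is_exact (d2 i (r - 1)) (d2 i r)"
  unfolding row_exact_at_def Hh_proj_def by (rule exact_if_homology_zero) (simp_all add: d2_d2)

lemma col_exact: "col_exact_at C d1 i r \<Longrightarrow> is_exact (d1 (i - 1) r) (d1 i r)"
  unfolding col_exact_at_def Hv_proj_def by (rule exact_if_homology_zero) (simp_all add: d1_d1)

text \<open>The two instances of the abstract setting: a horizontal arrow, whose parallel
  arrows are horizontal and transverse ones vertical, and a vertical arrow, where the roles
  are exchanged (which only swaps the arguments of the joint (co)kernels).\<close>

lemma extramural_iso_horizontal: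
  assumes "row_exact_at C d2 i r" "row_exact_at C d2 i (r + 1)"
  shows "is_iso C (extramural C d1 d2 i r i (r + 1) (d2 i r))"
proof -
  have "d1 i (r + 1) \<cdot> d2 i r \<cdot> d1 (i - 1) r = (d2 (i + 1) r \<cdot> d1 i r) \<cdot> d1 (i - 1) r"
    by (simp add: assoc[symmetric] d1_d2_commute)
  also have "\<dots> = zr (X (i - 1) r) (X (i + 1) (r + 1))" by (simp add: assoc d1_d1)
  finally interpret extramural_setting C "d2 i r" "d2 i (r - 1)" "d1 (i - 1) r" "d2 i (r + 1)"
    "d1 i (r + 1)" "don_incl C d1 d2 i r" "rec_incl C d1 d2 i (r + 1)" "don_proj C d1 d2 i r"
    using row_exact[OF assms(1)] row_exact[OF assms(2)]
    by (intro extramural_settingI) (simp_all add: don_incl_def rec_incl_def don_proj_def)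
  have "d1 (i - 1) (r + 1) \<cdot> d2 (i - 1) r = d2 i r \<cdot> d1 (i - 1) r"
    using d1_d2_commute[of "i - 1" r] by simp
  thus ?thesis using extramural_iso unfolding extramural_def rec_proj_def by simp
qed

lemma extramural_iso_vertical:
  assumes "col_exact_at C d1 i r" "col_exact_at C d1 (i + 1) r"
  shows "is_iso C (extramural C d1 d2 i r (i + 1) r (d1 i r))"
proof -
  have "d2 (i + 1) r \<cdot> d1 i r \<cdot> d2 i (r - 1) = (d1 i (r + 1) \<cdot> d2 i r) \<cdot> d2 i (r - 1)"
    by (simp add: assoc[symmetric] d1_d2_commute)
  also have "\<dots> = zr (X i (r - 1)) (X (i + 1) (r + 1))" by (simp add: assoc d2_d2)
  finally interpret extramural_setting C "d1 i r" "d1 (i - 1) r" "d2 i (r - 1)" "d1 (i + 1) r"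
    "d2 (i + 1) r" "don_incl C d1 d2 i r" "rec_incl C d1 d2 (i + 1) r" "don_proj C d1 d2 i r"
    using col_exact[OF assms(1)] col_exact[OF assms(2)]
    by (intro extramural_settingI) (simp_all add: don_incl_def rec_incl_def don_proj_def d1_d2_commute)
  show ?thesis using extramural_iso unfolding extramural_def rec_proj_def by simp
qed

end

theorem corollary2p1:
  fixes C :: "('o, 'm) abcat"
    and X :: "int \<Rightarrow> int \<Rightarrow> 'o"
    and d1 d2 :: "int \<Rightarrow> int \<Rightarrow> 'm"
    and i r :: int
  assumes "is_abelian C"
    and "double_complex C X d1 d2"
  shows "(row_exact_at C d2 i r \<and> row_exact_at C d2 i (r + 1) \<longrightarrow>
            is_iso C (extramural C d1 d2 i r i (r + 1) (d2 i r)))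
       \<and> (col_exact_at C d1 i r \<and> col_exact_at C d1 (i + 1) r \<longrightarrow>
            is_iso C (extramural C d1 d2 i r (i + 1) r (d1 i r)))"
proof -
  interpret abelian_double_complex C X d1 d2
    using assms by unfold_locales
  show ?thesis using extramural_iso_horizontal extramural_iso_vertical by blast
qed

end
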